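(* Let $T\in RB(n)$ with $n\ge 2$. Then $ES_T(i)=FP_T(i)$ holds for all $i\in[n]$ and for all assignments of strictly positive edge lengths to $T$ if and only if $T$ is a semi-balanced tree.
   Context: $RB(n)$ is the set of rooted binary phylogenetic trees with leaf set $[n]$ (every non-leaf vertex has out-degree 2). Each edge has length $l(e)>0$, and $n(e)$ is the number of leaves below $e$. $FP_T(i)=\sum_{e\in P(T;\rho,i)} l(e)/n(e)$ and $ES_T(i)=\sum_{e\in P(T;\rho,i)} l(e)/2^{k(e,i)}$, where $P(T;\rho,i)$ is the path from the root $\rho$ to leaf $i$ and $k(e,i)$ is the number of edges strictly between $e$ and $i$ on it. The fully balanced tree of height $h\ge 0$ is the rooted binary tree with $2^h$ leaves in which every leaf is separated from the root by exactly $h$ edges (for $h=0$ it is a single leaf). A rooted binary tree $T$ is semi-balanced if the two maximal pending subtrees rooted at the two children of the root are fully balanced trees of heights $h'$ and $h''$, not necessarily equal. *)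

theory Defs
  imports Complex_Main
begin

text \<open>A vertex is addressed by its
position (path from the root, False = left child, True = right child).
Each non-root vertex v corresponds to the edge from its parent to v;
so the edge set of a tree is its set of nonempty positions, and an
edge-length assignment is a function on positions.\<close>

datatype ltree = Leaf nat | Node ltree ltree

fun leaves :: "ltree \<Rightarrow> nat list" where
  "leaves (Leaf a) = [a]"
| "leaves (Node l r) = leaves l @ leaves r"

definition is_RB :: "nat \<Rightarrow> ltree \<Rightarrow> bool" where
  "is_RB n T \<longleftrightarrow> distinct (leaves T) \<and> set (leaves T) = {1..n}"

fun poss :: "ltree \<Rightarrow> bool list set" where
  "poss (Leaf a) = {[]}"
| "poss (Node l r) = {[]} \<union> Cons False ` poss l \<union> Cons True ` poss r"

fun subt :: "ltree \<Rightarrow> bool list \<Rightarrow> ltree" where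
  "subt t [] = t"
| "subt (Node l r) (False # p) = subt l p"
| "subt (Node l r) (True # p) = subt r p"
| "subt (Leaf a) (_ # p) = Leaf a"

definition edges :: "ltree \<Rightarrow> bool list set" where
  "edges T = poss T - {[]}"

definition nbelow :: "ltree \<Rightarrow> bool list \<Rightarrow> nat" where
  "nbelow T e = length (leaves (subt T e))"

definition path_edges :: "ltree \<Rightarrow> nat \<Rightarrow> bool list set" where
  "path_edges T i = {e \<in> edges T. i \<in> set (leaves (subt T e))}"

fun ldepth :: "nat \<Rightarrow> ltree \<Rightarrow> nat" where
  "ldepth i (Leaf a) = 0"
| "ldepth i (Node l r) = Suc (if i \<in> set (leaves l) then ldepth i l else ldepth i r)"

text \<open>k(e,i): number of edges strictly between e and leaf i = depth of i below
the lower endpoint of e.\<close>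
definition kbetween :: "ltree \<Rightarrow> bool list \<Rightarrow> nat \<Rightarrow> nat" where
  "kbetween T e i = ldepth i (subt T e)"

definition FP :: "ltree \<Rightarrow> (bool list \<Rightarrow> real) \<Rightarrow> nat \<Rightarrow> real" where
  "FP T l i = (\<Sum>e\<in>path_edges T i. l e / real (nbelow T e))"

definition ES :: "ltree \<Rightarrow> (bool list \<Rightarrow> real) \<Rightarrow> nat \<Rightarrow> real" where
  "ES T l i = (\<Sum>e\<in>path_edges T i. l e / 2 ^ kbetween T e i)"

fun fully_balanced :: "nat \<Rightarrow> ltree \<Rightarrow> bool" where
  "fully_balanced 0 (Leaf a) = True"
| "fully_balanced (Suc h) (Node l r) = (fully_balanced h l \<and> fully_balanced h r)"
| "fully_balanced _ _ = False"

definition semi_balanced :: "ltree \<Rightarrow> bool" where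
  "semi_balanced T \<longleftrightarrow> (\<exists>l r h1 h2. T = Node l r \<and> fully_balanced h1 l \<and> fully_balanced h2 r)"

end

theory Submission
  imports Defs
begin

text \<open>Both ES and FP are linear in the edge lengths, so they agree for all positive
lengths iff, for every edge e above a leaf i, the coefficients agree:
2^k(e,i) = n(e). Inside the pending subtree S below e this says that every leaf
of S lies at depth log2 |S|, i.e. S is fully balanced. Subtrees of fully balanced
trees are fully balanced, so the condition for all edges reduces to the two
edges at the root, which is semi-balancedness.\<close>

lemma leaves_not_Nil: "leaves t \<noteq> []"
  by (induction t) auto

lemma Nil_in_poss: "[] \<in> poss t"
  by (cases t) auto

lemma finite_poss: "finite (poss t)"
  by (induction t) auto

lemma set_leaves_subt_subset: "set (leaves (subt t p)) \<subseteq> set (leaves t)"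
  by (induction t p rule: subt.induct) auto

lemma distinct_leaves_subt: "distinct (leaves t) \<Longrightarrow> distinct (leaves (subt t p))"
  by (induction t p rule: subt.induct) auto

lemma edges_Node: "edges (Node l r) = Cons False ` poss l \<union> Cons True ` poss r"
  by (auto simp: edges_def)

lemma finite_path_edges: "finite (path_edges t i)"
  using finite_poss by (simp add: path_edges_def edges_def)

lemma fully_balanced_length_leaves: "fully_balanced h t \<Longrightarrow> length (leaves t) = 2 ^ h"
  by (induction h t rule: fully_balanced.induct) auto

lemma fully_balanced_ldepth: "fully_balanced h t \<Longrightarrow> i \<in> set (leaves t) \<Longrightarrow> ldepth i t = h"
  by (induction h t rule: fully_balanced.induct) auto

lemma fully_balanced_subt:
  "fully_balanced h t \<Longrightarrow> p \<in> poss t \<Longrightarrow> fully_balanced (h - length p) (subt t p)"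
  by (induction h t arbitrary: p rule: fully_balanced.induct) auto

lemma fully_balanced_if_ldepth_eq:
  "distinct (leaves t) \<Longrightarrow> (\<forall>i\<in>set (leaves t). ldepth i t = h) \<Longrightarrow> fully_balanced h t"
proof (induction t arbitrary: h)
  case (Leaf a)
  then show ?case by (cases h) auto
next
  case (Node l r)
  obtain i where "i \<in> set (leaves l)" using leaves_not_Nil[of l] by (cases "leaves l") auto
  then have "h = Suc (ldepth i l)" using Node.prems(2) by force
  then obtain h' where h: "h = Suc h'" by blast
  have "\<forall>i\<in>set (leaves l). ldepth i l = h'" using Node.prems h by auto
  moreover have "ldepth j r = h'" if j: "j \<in> set (leaves r)" for j
  proof -
    have "j \<notin> set (leaves l)" using Node.prems(1) j by auto
    then show ?thesis using Node.prems(2) j h by auto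
  qed
  ultimately show ?case using Node h by auto
qed

text \<open>The coefficient condition 2^k(e,i) = n(e), read inside the pending subtree.\<close>
definition leaf_depths_log_size :: "ltree \<Rightarrow> bool" where
  "leaf_depths_log_size t \<longleftrightarrow> (\<forall>i\<in>set (leaves t). 2 ^ ldepth i t = length (leaves t))"

lemma leaf_depths_log_size_iff_fully_balanced:
  assumes "distinct (leaves t)"
  shows "leaf_depths_log_size t \<longleftrightarrow> (\<exists>h. fully_balanced h t)"
proof
  assume depths: "leaf_depths_log_size t"
  obtain i0 where "i0 \<in> set (leaves t)" using leaves_not_Nil[of t] by (cases "leaves t") auto
  with depths have "\<forall>i\<in>set (leaves t). (2::nat) ^ ldepth i t = 2 ^ ldepth i0 t"
    by (simp add: leaf_depths_log_size_def)
  then have "\<forall>i\<in>set (leaves t). ldepth i t = ldepth i0 t"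
    by simp
  then show "\<exists>h. fully_balanced h t" using fully_balanced_if_ldepth_eq[OF assms] by blast
qed (auto simp: leaf_depths_log_size_def fully_balanced_length_leaves fully_balanced_ldepth)

lemma coeff_eq_if_weighted_sums_eq:
  fixes c d :: "'a \<Rightarrow> real"
  assumes "finite A" and "a \<in> A"
    and sums_eq: "\<And>w. (\<forall>x. 0 < w x) \<Longrightarrow> (\<Sum>x\<in>A. w x * c x) = (\<Sum>x\<in>A. w x * d x)"
  shows "c a = d a"
proof -
  \<comment> \<open>raising the weight of a from 1 to 2 changes a weighted sum by exactly its a-th coefficient\<close>
  define w :: "'a \<Rightarrow> real" where "w x = (if x = a then 2 else 1)" for x
  have bump: "(\<Sum>x\<in>A. w x * f x) - (\<Sum>x\<in>A. 1 * f x) = f a" for f :: "'a \<Rightarrow> real"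
  proof -
    have "(\<Sum>x\<in>A. w x * f x) - (\<Sum>x\<in>A. 1 * f x) = (\<Sum>x\<in>A. (w x - 1) * f x)"
      by (simp add: sum_subtractf left_diff_distrib)
    also have "\<dots> = (\<Sum>x\<in>A. if x = a then f x else 0)"
      by (rule sum.cong) (auto simp: w_def)
    also have "\<dots> = f a" using assms(1,2) by simp
    finally show ?thesis .
  qed
  have "(\<Sum>x\<in>A. w x * c x) = (\<Sum>x\<in>A. w x * d x)" by (rule sums_eq) (simp add: w_def)
  moreover have "(\<Sum>x\<in>A. 1 * c x) = (\<Sum>x\<in>A. 1 * d x)" by (rule sums_eq) simp
  ultimately show ?thesis using bump[of c] bump[of d] by simp
qed

lemma ES_eq_FP_iff_edge_subtrees:
  "(\<forall>l. (\<forall>e\<in>edges t. 0 < l e) \<longrightarrow> (\<forall>i\<in>set (leaves t). ES t l i = FP t l i))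
     \<longleftrightarrow> (\<forall>e\<in>edges t. leaf_depths_log_size (subt t e))"
proof
  assume ES_FP: "\<forall>l. (\<forall>e\<in>edges t. 0 < l e) \<longrightarrow> (\<forall>i\<in>set (leaves t). ES t l i = FP t l i)"
  have "2 ^ ldepth i (subt t e) = length (leaves (subt t e))"
    if e: "e \<in> edges t" and i: "i \<in> set (leaves (subt t e))" for e i
  proof -
    have "e \<in> path_edges t i" using e i by (simp add: path_edges_def)
    then have "1 / (2::real) ^ kbetween t e i = 1 / real (nbelow t e)"
    proof (rule coeff_eq_if_weighted_sums_eq[OF finite_path_edges])
      fix l :: "bool list \<Rightarrow> real"
      assume "\<forall>x. 0 < l x"
      moreover have "i \<in> set (leaves t)" using i set_leaves_subt_subset by blast
      ultimately have "ES t l i = FP t l i" using ES_FP by blast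
      then show "(\<Sum>x\<in>path_edges t i. l x * (1 / 2 ^ kbetween t x i))
               = (\<Sum>x\<in>path_edges t i. l x * (1 / real (nbelow t x)))"
        by (simp add: ES_def FP_def)
    qed
    then have "(2::real) ^ ldepth i (subt t e) = real (length (leaves (subt t e)))"
      by (simp add: kbetween_def nbelow_def)
    then show ?thesis by (metis of_nat_eq_iff of_nat_numeral of_nat_power)
  qed
  then show "\<forall>e\<in>edges t. leaf_depths_log_size (subt t e)"
    by (simp add: leaf_depths_log_size_def)
next
  assume subtrees: "\<forall>e\<in>edges t. leaf_depths_log_size (subt t e)"
  have "ES t l i = FP t l i" for l i
    unfolding ES_def FP_def
  proof (rule sum.cong)
    fix e assume "e \<in> path_edges t i"
    with subtrees have "2 ^ kbetween t e i = nbelow t e"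
      by (simp add: path_edges_def leaf_depths_log_size_def kbetween_def nbelow_def)
    then show "l e / 2 ^ kbetween t e i = l e / real (nbelow t e)"
      by (metis of_nat_numeral of_nat_power)
  qed simp
  then show "\<forall>l. (\<forall>e\<in>edges t. 0 < l e) \<longrightarrow> (\<forall>i\<in>set (leaves t). ES t l i = FP t l i)"
    by blast
qed

lemma semi_balanced_iff_edge_subtrees:
  "semi_balanced (Node l r) \<longleftrightarrow> (\<forall>e\<in>edges (Node l r). \<exists>h. fully_balanced h (subt (Node l r) e))"
proof
  assume "semi_balanced (Node l r)"
  then obtain hl hr where "fully_balanced hl l" "fully_balanced hr r"
    by (auto simp: semi_balanced_def)
  then show "\<forall>e\<in>edges (Node l r). \<exists>h. fully_balanced h (subt (Node l r) e)"
    by (fastforce simp: edges_Node dest: fully_balanced_subt)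
next
  assume edge_subtrees: "\<forall>e\<in>edges (Node l r). \<exists>h. fully_balanced h (subt (Node l r) e)"
  have "[False] \<in> edges (Node l r)" "[True] \<in> edges (Node l r)"
    by (auto simp: edges_Node Nil_in_poss)
  with edge_subtrees have "\<exists>h. fully_balanced h l" "\<exists>h. fully_balanced h r"
    by force+
  then show "semi_balanced (Node l r)" by (auto simp: semi_balanced_def)
qed

theorem theorem4:
  fixes n :: nat and T :: ltree
  assumes "n \<ge> 2" and "is_RB n T"
  shows "(\<forall>l :: bool list \<Rightarrow> real. (\<forall>e\<in>edges T. 0 < l e) \<longrightarrow>
            (\<forall>i\<in>{1..n}. ES T l i = FP T l i)) \<longleftrightarrow> semi_balanced T"
proof -
  have leaves_T: "set (leaves T) = {1..n}" and distinct_T: "distinct (leaves T)"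
    using assms(2) by (auto simp: is_RB_def)
  obtain l r where T: "T = Node l r"
  proof (cases T)
    case (Leaf a)
    with leaves_T have "{1..n} = {a}" by simp
    then have "card {1..n} = 1" by simp
    with assms(1) show ?thesis by simp
  qed
  have "(\<forall>l :: bool list \<Rightarrow> real. (\<forall>e\<in>edges T. 0 < l e) \<longrightarrow>
            (\<forall>i\<in>{1..n}. ES T l i = FP T l i))
        \<longleftrightarrow> (\<forall>e\<in>edges T. leaf_depths_log_size (subt T e))"
    using ES_eq_FP_iff_edge_subtrees[of T] by (simp add: leaves_T)
  also have "\<dots> \<longleftrightarrow> (\<forall>e\<in>edges T. \<exists>h. fully_balanced h (subt T e))"
    using leaf_depths_log_size_iff_fully_balanced distinct_leaves_subt[OF distinct_T] by blast
  also have "\<dots> \<longleftrightarrow> semi_balanced T"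
    by (simp add: T semi_balanced_iff_edge_subtrees)
  finally show ?thesis .
qed

end
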